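(* Let $f\in\mathcal{R}$ with $f(z)=z+\sum_{n=2}^\infty a_nz^n$ and local inverse $f^{-1}(w)=w+\sum_{n\ge2}A_nw^n$, so $A_2=-a_2$, $A_3=-a_3+2a_2^2$. Then $|A_2|\le1$ and $|A_3|\le\frac43$, and both bounds are attained by some $f\in\mathcal{R}$.
   Context: $\mathbb{D}$ is the open unit disk; $\mathcal{A}$ is the class of holomorphic $f$ on $\mathbb{D}$ with $f(0)=0$, $f'(0)=1$; $\mathcal{R}=\{f\in\mathcal{A}:\operatorname{Re} f'(z)>0\ \forall z\in\mathbb{D}\}$. *)

theory Defs
  imports "HOL-Complex_Analysis.Complex_Analysis"
begin

definition classA :: "(complex \<Rightarrow> complex) set" where
  "classA = {f. f holomorphic_on ball 0 1 \<and> f 0 = 0 \<and> deriv f 0 = 1}"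

definition classR :: "(complex \<Rightarrow> complex) set" where
  "classR = {f \<in> classA. \<forall>z \<in> ball 0 1. Re (deriv f z) > 0}"

definition taylor_coeff :: "(complex \<Rightarrow> complex) \<Rightarrow> nat \<Rightarrow> complex" where
  "taylor_coeff f n = (deriv ^^ n) f 0 / of_nat (fact n)"

definition inv_coeff2 :: "(complex \<Rightarrow> complex) \<Rightarrow> complex" where
  "inv_coeff2 f = - taylor_coeff f 2"

definition inv_coeff3 :: "(complex \<Rightarrow> complex) \<Rightarrow> complex" where
  "inv_coeff3 f = - taylor_coeff f 3 + 2 * (taylor_coeff f 2)^2"

end

theory Submission
  imports Defs
begin

(* The derivative p = f' has positive real part and p(0) = 1, so its Cayley transform
   w = (p - 1)/(p + 1) maps the disc into itself and fixes 0. Writing w(z) = z g(z), Schwarz's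
   lemma gives |g| <= 1, and the Schwarz-Pick inequality |g'(0)| <= 1 - |g(0)|^2 becomes
   Caratheodory's bound |c2 - c1^2/2| <= 2 - |c1|^2/2 for p(z) = 1 + c1 z + c2 z^2 + ...
   Since a2 = c1/2 and a3 = c2/3, we have A2 = -c1/2 and A3 = -(c2 - c1^2/2)/3 + c1^2/3, whence
   |A2| <= 1 and |A3| <= 2/3 + |c1|^2/6 <= 4/3. Both bounds are attained by
   f(z) = -z - 2 log(1 - z), for which f'(z) = (1 + z)/(1 - z), i.e. w(z) = z. *)

lemma deriv_eq_if_eq_on_open:
  fixes f g :: "'a::real_normed_field \<Rightarrow> 'a"
  assumes "(g has_field_derivative D) (at x)" and "open S" and "x \<in> S"
    and "\<And>z. z \<in> S \<Longrightarrow> f z = g z"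
  shows "deriv f x = D"
  using assms by (metis DERIV_imp_deriv has_field_derivative_transform_within_open)

lemma Schwarz_Pick_deriv_0:
  assumes holg: "g holomorphic_on ball 0 1" and g1: "\<And>z. norm z < 1 \<Longrightarrow> norm (g z) < 1"
  shows "norm (deriv g 0) \<le> 1 - (norm (g 0))^2"
proof -
  define a where "a = g 0"
  have a1: "norm a < 1"
    using g1[of 0] by (simp add: a_def)
  define h where "h = Moebius_function 0 a \<circ> g"
  have holh: "h holomorphic_on ball 0 1"
    unfolding h_def using g1
    by (intro holomorphic_on_compose_gen[OF holg Moebius_function_holomorphic[OF a1]]) auto
  have h0: "h 0 = 0"
    by (simp add: h_def a_def Moebius_function_eq_zero)
  have h1: "norm (h z) < 1" if "norm z < 1" for z
    using Moebius_function_norm_lt_1[OF a1 g1[OF that]] by (simp add: h_def)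
  have h'0: "norm (deriv h 0) \<le> 1"
    using Schwarz_Lemma(2)[OF holh h0 h1, of 0] by simp
  have aa: "1 - cnj a * a = of_real (1 - (norm a)^2)"
    by (metis complex_norm_square mult.commute of_real_1 of_real_diff)
  have "(norm a)^2 < 1"
    using a1 by (simp add: abs_square_less_1)
  then have aa0: "1 - cnj a * a \<noteq> 0"
    unfolding aa of_real_eq_0_iff by simp
  have gd: "(g has_field_derivative deriv g 0) (at 0)"
    using holg by (intro holomorphic_derivI[of _ "ball 0 1"]) auto
  have "deriv h 0 = deriv g 0 / (1 - cnj a * a)"
  proof (rule DERIV_imp_deriv)
    show "(h has_field_derivative deriv g 0 / (1 - cnj a * a)) (at 0)"
      unfolding h_def o_def Moebius_function_simple using aa0
      by (auto intro!: derivative_eq_intros gd simp: a_def[symmetric] power2_eq_square)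
  qed
  moreover have "norm (1 - cnj a * a) = 1 - (norm a)^2"
    using \<open>(norm a)^2 < 1\<close> unfolding aa norm_of_real by simp
  ultimately have "norm (deriv h 0) = norm (deriv g 0) / (1 - (norm a)^2)"
    by (simp add: norm_divide)
  with h'0 \<open>(norm a)^2 < 1\<close> show ?thesis
    by (simp add: a_def divide_le_eq)
qed

lemma Schwarz_Pick_deriv_0_closed_disc:
  assumes holg: "g holomorphic_on ball 0 1" and g1: "\<And>z. norm z < 1 \<Longrightarrow> norm (g z) \<le> 1"
  shows "norm (deriv g 0) \<le> 1 - (norm (g 0))^2"
proof -
  have scaled: "r * norm (deriv g 0) + r^2 * (norm (g 0))^2 \<le> 1" if r: "0 < r" "r < 1" for r
  proof -
    have "norm (of_real r * g z) < 1" if "norm z < 1" for z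
    proof -
      have "norm (of_real r * g z) = r * norm (g z)"
        using r by (simp add: norm_mult)
      also have "\<dots> \<le> r"
        using r g1[OF that] by (simp add: mult_left_le)
      finally show ?thesis
        using r by simp
    qed
    then have "norm (deriv (\<lambda>z. of_real r * g z) 0) \<le> 1 - (norm (of_real r * g 0))^2"
      using holg by (intro Schwarz_Pick_deriv_0) (auto intro: holomorphic_intros)
    moreover have "deriv (\<lambda>z. of_real r * g z) 0 = of_real r * deriv g 0"
      using holg by (intro deriv_cmult holomorphic_on_imp_differentiable_at[of _ "ball 0 1"]) auto
    ultimately show ?thesis
      using r by (simp add: norm_mult power_mult_distrib)
  qed
  have "eventually (\<lambda>r. r * norm (deriv g 0) + r^2 * (norm (g 0))^2 \<le> 1) (at_left (1::real))"
    using eventually_at_left_real[OF zero_less_one] by (rule eventually_mono) (simp add: scaled)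
  moreover have "((\<lambda>r. r * norm (deriv g 0) + r^2 * (norm (g 0))^2)
      \<longlongrightarrow> 1 * norm (deriv g 0) + 1^2 * (norm (g 0))^2) (at_left (1::real))"
    by (intro tendsto_intros)
  ultimately have "1 * norm (deriv g 0) + 1^2 * (norm (g 0))^2 \<le> 1"
    using tendsto_le[OF trivial_limit_at_left_real tendsto_const] by blast
  then show ?thesis
    by simp
qed

lemma Schwarz_second_deriv_0_bound:
  assumes holw: "w holomorphic_on ball 0 1" and w0: "w 0 = 0"
    and w1: "\<And>z. norm z < 1 \<Longrightarrow> norm (w z) < 1"
  shows "norm (deriv (deriv w) 0) / 2 \<le> 1 - (norm (deriv w 0))^2"
proof -
  obtain g where holg: "g holomorphic_on ball 0 1" and wg: "\<And>z. norm z < 1 \<Longrightarrow> w z = z * g z"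
    and w'0: "deriv w 0 = g 0"
    using Schwarz3[OF holw w0] by blast
  have g1: "norm (g z) \<le> 1" if "norm z < 1" for z
  proof (cases "z = 0")
    case True
    then show ?thesis
      using Schwarz_Lemma(2)[OF holw w0 w1 that] w'0 by simp
  next
    case False
    then show ?thesis
      using Schwarz_Lemma(1)[OF holw w0 w1 that] wg[OF that] by (simp add: norm_mult)
  qed
  have gd: "(g has_field_derivative deriv g z) (at z)" if "norm z < 1" for z
    using holg that by (intro holomorphic_derivI[of _ "ball 0 1"]) auto
  have "(deriv g has_field_derivative deriv (deriv g) 0) (at 0)"
    using holg by (intro holomorphic_derivI[of _ "ball 0 1"] holomorphic_deriv) auto
  then have w''0: "((\<lambda>z. g z + z * deriv g z) has_field_derivative 2 * deriv g 0) (at 0)"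
    by (auto intro!: derivative_eq_intros gd)
  have w': "deriv w z = g z + z * deriv g z" if "z \<in> ball 0 1" for z
    by (rule deriv_eq_if_eq_on_open[where g = "\<lambda>z. z * g z" and S = "ball 0 1"])
       (use that wg in \<open>auto intro!: derivative_eq_intros gd\<close>)
  have "deriv (deriv w) 0 = 2 * deriv g 0"
    by (rule deriv_eq_if_eq_on_open[where S = "ball 0 1", OF w''0 _ _ w']) auto
  then show ?thesis
    using Schwarz_Pick_deriv_0_closed_disc[OF holg g1] w'0 by (simp add: norm_mult)
qed

lemma norm_Cayley_less_1:
  fixes u :: complex
  assumes "Re u > 0"
  shows "norm ((u - 1) / (u + 1)) < 1"
proof -
  have "(norm (u - 1))^2 < (norm (u + 1))^2"
    using assms unfolding cmod_power2 by (simp add: power2_eq_square algebra_simps)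
  then have "norm (u - 1) < norm (u + 1)"
    by (simp add: power_less_imp_less_base)
  then show ?thesis
    by (simp add: norm_divide divide_less_eq)
qed

lemma Caratheodory_second_coeff_bound:
  assumes holp: "p holomorphic_on ball 0 1" and p0: "p 0 = 1"
    and re: "\<And>z. norm z < 1 \<Longrightarrow> Re (p z) > 0"
  shows "norm (deriv (deriv p) 0 / 2 - (deriv p 0)^2 / 2) \<le> 2 - (norm (deriv p 0))^2 / 2"
proof -
  have pne: "p z + 1 \<noteq> 0" if "norm z < 1" for z
  proof -
    have "Re (p z + 1) > 0"
      using re[OF that] by simp
    then show ?thesis
      by fastforce
  qed
  define w where "w = (\<lambda>z. (p z - 1) / (p z + 1))"
  have holw: "w holomorphic_on ball 0 1"
    unfolding w_def using pne by (intro holomorphic_intros holp) auto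
  have w0: "w 0 = 0"
    by (simp add: w_def p0)
  have w1: "norm (w z) < 1" if "norm z < 1" for z
    unfolding w_def using norm_Cayley_less_1[OF re[OF that]] .
  have pd: "(p has_field_derivative deriv p z) (at z)" if "norm z < 1" for z
    using holp that by (intro holomorphic_derivI[of _ "ball 0 1"]) auto
  have "(deriv p has_field_derivative deriv (deriv p) 0) (at 0)"
    using holp by (intro holomorphic_derivI[of _ "ball 0 1"] holomorphic_deriv) auto
  then have w''0: "((\<lambda>z. 2 * deriv p z / (p z + 1)^2) has_field_derivative
      deriv (deriv p) 0 / 2 - (deriv p 0)^2 / 2) (at 0)"
    by (auto intro!: derivative_eq_intros pd simp: p0 field_simps power2_eq_square)
  have w': "deriv w z = 2 * deriv p z / (p z + 1)^2" if "z \<in> ball 0 1" for z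
  proof (rule DERIV_imp_deriv)
    show "(w has_field_derivative 2 * deriv p z / (p z + 1)^2) (at z)"
      unfolding w_def using pne that
      by (auto intro!: derivative_eq_intros pd simp: field_simps power2_eq_square)
  qed
  have w''_eq: "deriv (deriv w) 0 = deriv (deriv p) 0 / 2 - (deriv p 0)^2 / 2"
    by (rule deriv_eq_if_eq_on_open[where S = "ball 0 1", OF w''0 _ _ w']) auto
  have w'_eq: "deriv w 0 = deriv p 0 / 2"
    using w'[of 0] by (simp add: p0)
  have "norm (deriv (deriv w) 0) / 2 \<le> 1 - (norm (deriv w 0))^2"
    by (rule Schwarz_second_deriv_0_bound[OF holw w0 w1])
  then show ?thesis
    unfolding w''_eq w'_eq by (simp add: norm_divide power_divide)
qed

lemma classR_inv_coeff_bounds: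
  assumes "f \<in> classR"
  shows "cmod (inv_coeff2 f) \<le> 1" and "cmod (inv_coeff3 f) \<le> 4/3"
proof -
  have holf: "f holomorphic_on ball 0 1" and f'0: "deriv f 0 = 1"
    and re: "\<And>z. norm z < 1 \<Longrightarrow> Re (deriv f z) > 0"
    using assms by (auto simp: classR_def classA_def)
  define c1 where "c1 = deriv (deriv f) 0"
  define c2 where "c2 = deriv (deriv (deriv f)) 0 / 2"
  have "deriv f holomorphic_on ball 0 1"
    using holf by (intro holomorphic_deriv) auto
  from Caratheodory_second_coeff_bound[OF this f'0 re]
  have car: "norm (c2 - c1^2 / 2) \<le> 2 - (norm c1)^2 / 2"
    by (simp add: c1_def c2_def)
  then have "(norm c1)^2 \<le> 4"
    using norm_ge_zero[of "c2 - c1^2 / 2"] by linarith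
  then have c1: "norm c1 \<le> 2"
    using power2_le_imp_le[of "norm c1" 2] by simp
  have a2: "taylor_coeff f 2 = c1 / 2" and a3: "taylor_coeff f 3 = c2 / 3"
    by (simp_all add: taylor_coeff_def c1_def c2_def numeral_eq_Suc)
  show "cmod (inv_coeff2 f) \<le> 1"
    using c1 by (simp add: inv_coeff2_def a2 norm_divide)
  have "inv_coeff3 f = - (c2 - c1^2 / 2) / 3 + c1^2 / 3"
    by (simp add: inv_coeff3_def a2 a3 field_simps power2_eq_square)
  then have "cmod (inv_coeff3 f) \<le> norm (c2 - c1^2 / 2) / 3 + (norm c1)^2 / 3"
    using norm_triangle_ineq[of "- (c2 - c1^2 / 2) / 3" "c1^2 / 3"]
    by (simp add: norm_divide norm_power norm_minus_commute)
  also have "\<dots> \<le> 2/3 + (norm c1)^2 / 6"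
    using car by simp
  also have "\<dots> \<le> 4/3"
    using power_mono[OF c1 norm_ge_zero, of 2] by simp
  finally show "cmod (inv_coeff3 f) \<le> 4/3" .
qed

definition classR_extremal :: "complex \<Rightarrow> complex" where
  "classR_extremal z = - z - 2 * Ln (1 - z)"

lemma has_field_derivative_classR_extremal:
  assumes "norm z < 1"
  shows "(classR_extremal has_field_derivative (1 + z) / (1 - z)) (at z)"
proof -
  have "Re (1 - z) > 0"
    using assms complex_Re_le_cmod[of z] by simp
  then have "1 - z \<notin> \<real>\<^sub>\<le>\<^sub>0" and "1 - z \<noteq> 0"
    by (auto simp: complex_nonpos_Reals_iff)
  then show ?thesis
    unfolding classR_extremal_def[abs_def]
    by (auto intro!: derivative_eq_intros simp: field_simps)
qed

lemma classR_extremal_in_classR: "classR_extremal \<in> classR"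
proof -
  have "classR_extremal holomorphic_on ball 0 1"
    unfolding holomorphic_on_def field_differentiable_def
    by (metis has_field_derivative_classR_extremal has_field_derivative_at_within mem_ball_0)
  moreover have "Re (deriv classR_extremal z) > 0" if "norm z < 1" for z
  proof -
    have "(Re z)^2 + (Im z)^2 < 1"
      using that by (simp add: cmod_def)
    moreover have "z \<noteq> 1"
      using that by auto
    then have "(Re (1 - z))^2 + (Im (1 - z))^2 > 0"
      by (metis right_minus_eq sum_power2_gt_zero_iff complex_eq_iff zero_complex.sel)
    ultimately show ?thesis
      using DERIV_imp_deriv[OF has_field_derivative_classR_extremal[OF that]]
      by (simp add: Re_divide power2_eq_square algebra_simps)
  qed
  moreover have "deriv classR_extremal 0 = 1"
    using DERIV_imp_deriv[OF has_field_derivative_classR_extremal[of 0]] by simp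
  ultimately show ?thesis
    by (simp add: classR_def classA_def classR_extremal_def)
qed

lemma inv_coeffs_classR_extremal:
  shows "inv_coeff2 classR_extremal = -1" and "inv_coeff3 classR_extremal = 4/3"
proof -
  have d1: "deriv classR_extremal z = (1 + z) / (1 - z)" if "z \<in> ball 0 1" for z
    using that by (intro DERIV_imp_deriv has_field_derivative_classR_extremal) simp
  have d2: "deriv (deriv classR_extremal) z = 2 / (1 - z)^2" if "z \<in> ball 0 1" for z
  proof (rule deriv_eq_if_eq_on_open[where S = "ball 0 1", OF _ _ that d1])
    show "((\<lambda>z. (1 + z) / (1 - z)) has_field_derivative 2 / (1 - z)^2) (at z)"
      using that by (auto intro!: derivative_eq_intros simp: field_simps power2_eq_square)
  qed simp
  have d3: "deriv (deriv (deriv classR_extremal)) 0 = 4"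
  proof (rule deriv_eq_if_eq_on_open[where S = "ball 0 1", OF _ _ _ d2])
    show "((\<lambda>z. 2 / (1 - z)^2) has_field_derivative 4) (at 0)"
      by (auto intro!: derivative_eq_intros)
  qed simp_all
  have "taylor_coeff classR_extremal 2 = 1" and "taylor_coeff classR_extremal 3 = 2/3"
    using d2[of 0] d3 by (simp_all add: taylor_coeff_def numeral_eq_Suc)
  then show "inv_coeff2 classR_extremal = -1" and "inv_coeff3 classR_extremal = 4/3"
    by (simp_all add: inv_coeff2_def inv_coeff3_def)
qed

theorem mainTheorem4:
  shows "(\<forall>f \<in> classR. cmod (inv_coeff2 f) \<le> 1 \<and> cmod (inv_coeff3 f) \<le> 4/3)
       \<and> (\<exists>f \<in> classR. cmod (inv_coeff2 f) = 1)
       \<and> (\<exists>f \<in> classR. cmod (inv_coeff3 f) = 4/3)"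
proof (intro conjI)
  show "\<forall>f \<in> classR. cmod (inv_coeff2 f) \<le> 1 \<and> cmod (inv_coeff3 f) \<le> 4/3"
    using classR_inv_coeff_bounds by blast
  show "\<exists>f \<in> classR. cmod (inv_coeff2 f) = 1"
    by (rule bexI[OF _ classR_extremal_in_classR]) (simp add: inv_coeffs_classR_extremal)
  show "\<exists>f \<in> classR. cmod (inv_coeff3 f) = 4/3"
    by (rule bexI[OF _ classR_extremal_in_classR]) (simp add: inv_coeffs_classR_extremal norm_divide)
qed

end
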